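(* In the truncated sparse linear regression model of the context, assume (A1) survival probability, (A2) minimum eigenvalue and (A4) normalization. Then there exists $\kappa\ge\Omega(\alpha^4\sigma_{\min})>0$ (with an absolute implied constant) such that $\nabla^2 l_n^K(\vec{\omega})\succeq\kappa I$ for all $\vec{\omega}\in\mathbb{R}^k$ with $\|\vec{\omega}-\vec{\Omega}^*_K\|_2\le\frac{1}{C\sqrt k}$.
   Context: $S\subseteq\mathbb{R}$ measurable with indicator $S(\cdot)$. Fixed row vectors $\vec{x}^{(1)},\dots,\vec{x}^{(n)}\in\mathbb{R}^d$ form the rows of $\vec{X}\in\mathbb{R}^{n\times d}$. $\vec{\Omega}^*\in\mathbb{R}^d$ has support $K$, $|K|=k$; $\vec{\Omega}^*_K\in\mathbb{R}^k$ is its restriction to $K$, $\vec{x}^{(i)}_K$ the restriction of $\vec{x}^{(i)}$, and $\vec{X}_K$ the columns of $\vec{X}$ indexed by $K$. Responses $y^{(i)}$ are independent, $y^{(i)}\sim\mathcal{N}(\vec{x}^{(i)}\vec{\Omega}^*,1)$ conditioned on $S$. $l_n(\vec{\Omega})=\frac1n\sum_{i=1}^n\left(\frac12{y^{(i)}}^2-y^{(i)}\vec{x}^{(i)}\vec{\Omega}+\log\int\exp\left(-\frac12z^2+z\,\vec{x}^{(i)}\vec{\Omega}\right)S(z)dz\right)$, and $l_n^K(\vec{\omega})=l_n(\vec{\Omega})$ where $\vec{\Omega}\in\mathbb{R}^d$ equals $\vec{\omega}$ on $K$ and $0$ off $K$. $\alpha(\vec{\Omega},\vec{x})=\Pr_{y\sim\mathcal{N}(\vec{x}\vec{\Omega},1)}[y\in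 S]$. (A1): $\alpha(\vec{\Omega}^*,\vec{x}^{(i)})\ge\alpha>0$ for all $i$; (A2): $\frac1n\vec{X}_K^\top\vec{X}_K\succeq\sigma_{\min}I$, $\sigma_{\min}>0$; (A4): $\max_{i,j}|X_{ij}|\le C$. *)

theory Defs
  imports "HOL-Probability.Probability"
begin

text \<open>Explicit-carrier encoding: samples are indexed by i < n, features by j < d,
  and vectors of R^k by i < k (as functions nat => real; coordinates >= k are ignored).
  This allows the constant to be absolute, i.e. quantified outside of n, d, k.\<close>

definition Kidx :: "nat set \<Rightarrow> nat \<Rightarrow> nat" where
  "Kidx K i = sorted_list_of_set K ! i"

definition row_ip :: "(nat \<Rightarrow> nat \<Rightarrow> real) \<Rightarrow> nat \<Rightarrow> nat \<Rightarrow> (nat \<Rightarrow> real) \<Rightarrow> real" where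
  "row_ip X d i \<Omega> = (\<Sum>j<d. X i j * \<Omega> j)"

definition surv_prob :: "real set \<Rightarrow> real \<Rightarrow> real" where
  "surv_prob S \<mu> = measure (density lborel (normal_density \<mu> 1)) S"

definition trunc_nll :: "real set \<Rightarrow> nat \<Rightarrow> nat \<Rightarrow> (nat \<Rightarrow> nat \<Rightarrow> real) \<Rightarrow> (nat \<Rightarrow> real)
     \<Rightarrow> (nat \<Rightarrow> real) \<Rightarrow> real" where
  "trunc_nll S n d X y \<Omega> = (1 / real n) * (\<Sum>i<n.
      (1/2) * (y i)\<^sup>2 - y i * row_ip X d i \<Omega>
      + ln (LINT z|lborel. indicator S z * exp (- (1/2) * z\<^sup>2 + z * row_ip X d i \<Omega>)))"

definition extK :: "nat set \<Rightarrow> (nat \<Rightarrow> real) \<Rightarrow> nat \<Rightarrow> real" where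
  "extK K \<omega> = (\<lambda>j. \<Sum>i<card K. if Kidx K i = j then \<omega> i else 0)"

definition trunc_nll_K :: "real set \<Rightarrow> nat \<Rightarrow> nat \<Rightarrow> nat set \<Rightarrow> (nat \<Rightarrow> nat \<Rightarrow> real)
     \<Rightarrow> (nat \<Rightarrow> real) \<Rightarrow> (nat \<Rightarrow> real) \<Rightarrow> real" where
  "trunc_nll_K S n d K X y \<omega> = trunc_nll S n d X y (extK K \<omega>)"

definition has_partial :: "((nat \<Rightarrow> real) \<Rightarrow> real) \<Rightarrow> nat \<Rightarrow> (nat \<Rightarrow> real) \<Rightarrow> real \<Rightarrow> bool" where
  "has_partial f i w D \<longleftrightarrow> ((\<lambda>t. f (w(i := t))) has_real_derivative D) (at (w i))"

definition is_hessian :: "((nat \<Rightarrow> real) \<Rightarrow> real) \<Rightarrow> nat \<Rightarrow> (nat \<Rightarrow> real) \<Rightarrow> (nat \<Rightarrow> nat \<Rightarrow> real) \<Rightarrow> bool" where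
  "is_hessian f k w H \<longleftrightarrow> (\<exists>g. (\<forall>u i. i < k \<longrightarrow> has_partial f i u (g i u)) \<and>
       (\<forall>i j. i < k \<longrightarrow> j < k \<longrightarrow> has_partial (g i) j w (H i j)))"

end

theory Submission
  imports Defs
begin

text \<open>Up to terms linear in \<omega>, the restricted loss is (1/n) \<Sum>_i ln Z(<x_i, \<omega>>) with
  Z(m) = \<integral>_S exp(-z^2/2 + m z) dz, and (ln Z)''(m) is the variance of N(m,1) conditioned on S.
  So the Hessian is (1/n) \<Sum>_i Var_i x_i x_i^T, and by (A2) it suffices to bound every variance
  from below by a multiple of \<alpha>^4.

  Since the Gaussian density is bounded, an interval of length 2r around the conditional mean
  carries mass at most of order r; this gives Var \<ge> (\<pi>/16) P(m)^2, where P(m) is the survival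
  probability. Next, the density of N(\<mu>,1) is exp((m-\<mu>)^2/2) times the geometric mean of those of
  N(m,1) and N(2\<mu>-m,1), and AM-GM yields P(\<mu>)^2 \<le> exp((m-\<mu>)^2) P(m). On the ball of the
  statement, (A4) and Cauchy-Schwarz give |<x_i, \<omega> - \<Omega>*>| \<le> 1, hence P \<ge> \<alpha>^2/e by (A1) and
  Var \<ge> \<pi> exp(-2) \<alpha>^4 / 16.\<close>

lemma has_real_derivative_lborel_integral:
  fixes f f' :: "real \<Rightarrow> real \<Rightarrow> real" and G :: "real \<Rightarrow> real"
  assumes int: "\<And>t. integrable lborel (f t)"
    and deriv: "\<And>t z. ((\<lambda>t. f t z) has_real_derivative f' t z) (at t)"
    and meas: "f' m \<in> borel_measurable lborel"
    and G: "integrable lborel G"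
    and bound: "\<And>t z. \<bar>t - m\<bar> \<le> 1 \<Longrightarrow> \<bar>f' t z\<bar> \<le> G z"
  shows "((\<lambda>t. LINT z|lborel. f t z) has_real_derivative (LINT z|lborel. f' m z)) (at m)"
  unfolding has_field_derivative_iff tendsto_at_iff_sequentially
proof (intro allI impI)
  fix X :: "nat \<Rightarrow> real"
  assume X: "\<forall>i. X i \<in> UNIV - {m}" and lim: "X \<longlonglongrightarrow> m"
  from lim have "\<forall>\<^sub>F i in sequentially. dist (X i) m < 1"
    by (simp add: tendsto_iff)
  then obtain N where N: "\<And>i. i \<ge> N \<Longrightarrow> \<bar>X i - m\<bar> < 1"
    by (auto simp: eventually_sequentially dist_real_def)
  define q where "q i z = (f (X (i + N)) z - f m z) / (X (i + N) - m)" for i z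
  have q_bound: "\<bar>q i z\<bar> \<le> G z" for i z
  proof -
    have "norm (f (X (i + N)) z - f m z) \<le> G z * norm (X (i + N) - m)"
    proof (rule field_differentiable_bound[where S = "{m - 1..m + 1}" and f' = "\<lambda>t. f' t z"])
      show "((\<lambda>t. f t z) has_field_derivative f' t z) (at t within {m - 1..m + 1})" for t
        using deriv by (rule has_field_derivative_at_within)
      show "X (i + N) \<in> {m - 1..m + 1}" using N[of "i + N"] by auto
    qed (use bound in auto)
    then show ?thesis using X by (auto simp: q_def abs_divide pos_divide_le_eq)
  qed
  have "(\<lambda>i. LINT z|lborel. q i z) \<longlonglongrightarrow> (LINT z|lborel. f' m z)"
  proof (rule integral_dominated_convergence[where w = G])
    show "(\<lambda>z. q i z) \<in> borel_measurable lborel" for i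
      unfolding q_def using int by (intro borel_measurable_divide borel_measurable_diff) auto
    show "AE z in lborel. (\<lambda>i. q i z) \<longlonglongrightarrow> f' m z"
    proof (intro AE_I2)
      fix z
      have "((\<lambda>t. (f t z - f m z) / (t - m)) \<longlongrightarrow> f' m z) (at m)"
        using deriv[of z m] unfolding has_field_derivative_iff .
      then show "(\<lambda>i. q i z) \<longlonglongrightarrow> f' m z"
        using X LIMSEQ_ignore_initial_segment[OF lim, of N]
        unfolding q_def tendsto_at_iff_sequentially by (auto simp: o_def)
    qed
  qed (use meas G q_bound in auto)
  moreover have "(LINT z|lborel. q i z)
      = ((LINT z|lborel. f (X (i + N)) z) - (LINT z|lborel. f m z)) / (X (i + N) - m)" for i
    unfolding q_def using int by simp
  ultimately have "(\<lambda>i. ((LINT z|lborel. f (X (i + N)) z) - (LINT z|lborel. f m z)) / (X (i + N) - m))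
      \<longlonglongrightarrow> (LINT z|lborel. f' m z)"
    by simp
  then show "((\<lambda>t. ((LINT z|lborel. f t z) - (LINT z|lborel. f m z)) / (t - m)) \<circ> X)
      \<longlonglongrightarrow> (LINT z|lborel. f' m z)"
    unfolding o_def by (rule LIMSEQ_offset)
qed

lemma integrable_normal_density_times_power:
  assumes "\<sigma> > 0"
  shows "integrable lborel (\<lambda>z. normal_density \<mu> \<sigma> z * z ^ j)"
proof -
  have "normal_density \<mu> \<sigma> z * z ^ j
      = (\<Sum>i\<le>j. of_nat (j choose i) * \<mu> ^ (j - i) * (normal_density \<mu> \<sigma> z * (z - \<mu>) ^ i))" for z
  proof -
    have "z ^ j = (\<Sum>i\<le>j. of_nat (j choose i) * (z - \<mu>) ^ i * \<mu> ^ (j - i))"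
      using binomial_ring[of "z - \<mu>" \<mu> j] by simp
    then show ?thesis by (simp add: sum_distrib_left mult_ac)
  qed
  then show ?thesis
    using assms
    by (simp only:) (intro Bochner_Integration.integrable_sum integrable_mult_right integrable_normal_moment)
qed

definition gauss_weight :: "real \<Rightarrow> real \<Rightarrow> real" where
  "gauss_weight m z = exp (- (1/2) * z\<^sup>2 + z * m)"

lemma gauss_weight_pos: "gauss_weight m z > 0"
  by (simp add: gauss_weight_def)

lemma gauss_weight_measurable [measurable]: "gauss_weight m \<in> borel_measurable borel"
  unfolding gauss_weight_def by measurable

lemma gauss_weight_eq_normal_density:
  "gauss_weight m z = sqrt (2 * pi) * exp (m\<^sup>2 / 2) * normal_density m 1 z"
proof -
  have "sqrt (2 * pi) * exp (m\<^sup>2 / 2) * normal_density m 1 z = exp (m\<^sup>2 / 2) * exp (- (z - m)\<^sup>2 / 2)"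
    by (simp add: normal_density_def)
  also have "\<dots> = gauss_weight m z"
    unfolding mult_exp_exp gauss_weight_def
    by (rule arg_cong[where f = exp]) (simp add: power2_eq_square field_simps)
  finally show ?thesis ..
qed

lemma gauss_weight_le: "gauss_weight m z \<le> exp (m\<^sup>2 / 2)"
proof -
  have "- (1/2) * z\<^sup>2 + z * m = m\<^sup>2 / 2 - (z - m)\<^sup>2 / 2"
    by (simp add: power2_eq_square field_simps)
  then show ?thesis by (simp add: gauss_weight_def)
qed

lemma exp_abs_mult_gauss_weight_le:
  "exp \<bar>z\<bar> * gauss_weight m z \<le> gauss_weight (m + 1) z + gauss_weight (m - 1) z"
proof (cases "z \<ge> 0")
  case True
  then have "exp \<bar>z\<bar> * gauss_weight m z = gauss_weight (m + 1) z"
    unfolding gauss_weight_def mult_exp_exp by (simp add: algebra_simps)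
  then show ?thesis using gauss_weight_pos[of "m - 1" z] by simp
next
  case False
  then have "exp \<bar>z\<bar> * gauss_weight m z = gauss_weight (m - 1) z"
    unfolding gauss_weight_def mult_exp_exp by (simp add: algebra_simps)
  then show ?thesis using gauss_weight_pos[of "m + 1" z] by simp
qed

lemma gauss_weight_le_shifts:
  assumes "\<bar>t - m\<bar> \<le> 1"
  shows "gauss_weight t z \<le> gauss_weight (m + 1) z + gauss_weight (m - 1) z"
proof -
  have "z * (t - m) \<le> \<bar>z\<bar> * \<bar>t - m\<bar>"
    by (metis abs_ge_self abs_mult)
  also have "\<dots> \<le> \<bar>z\<bar>"
    using assms by (simp add: mult_left_le)
  finally have "gauss_weight t z \<le> exp \<bar>z\<bar> * gauss_weight m z"
    by (simp add: gauss_weight_def mult_exp_exp algebra_simps)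
  then show ?thesis using exp_abs_mult_gauss_weight_le[of z m] by linarith
qed

lemma integrable_power_gauss_weight: "integrable lborel (\<lambda>z. z ^ j * gauss_weight m z)"
proof -
  have "z ^ j * gauss_weight m z = sqrt (2 * pi) * exp (m\<^sup>2 / 2) * (normal_density m 1 z * z ^ j)" for z
    by (simp add: gauss_weight_eq_normal_density)
  then show ?thesis
    by (simp only:) (intro integrable_mult_right integrable_normal_density_times_power zero_less_one)
qed

definition trunc_moment :: "real set \<Rightarrow> nat \<Rightarrow> real \<Rightarrow> real" where
  "trunc_moment S j m = (LINT z|lborel. indicator S z * z ^ j * gauss_weight m z)"

lemma integrable_trunc_moment:
  assumes "S \<in> sets borel"
  shows "integrable lborel (\<lambda>z. indicator S z * z ^ j * gauss_weight m z)"
proof (rule Bochner_Integration.integrable_bound)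
  show "integrable lborel (\<lambda>z. z ^ j * gauss_weight m z)"
    by (rule integrable_power_gauss_weight)
  show "AE z in lborel. norm (indicator S z * z ^ j * gauss_weight m z) \<le> norm (z ^ j * gauss_weight m z)"
    by (intro AE_I2) (auto simp: indicator_def)
qed (use assms in measurable)

lemma has_real_derivative_trunc_moment:
  assumes S: "S \<in> sets borel"
  shows "(trunc_moment S j has_real_derivative trunc_moment S (Suc j) m) (at m)"
  unfolding trunc_moment_def[abs_def]
proof (rule has_real_derivative_lborel_integral
    [where G = "\<lambda>z. \<bar>z\<bar> ^ Suc j * (gauss_weight (m + 1) z + gauss_weight (m - 1) z)"])
  show "((\<lambda>t. indicator S z * z ^ j * gauss_weight t z) has_real_derivative
      indicator S z * z ^ Suc j * gauss_weight t z) (at t)" for z t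
    unfolding gauss_weight_def by (auto intro!: derivative_eq_intros simp: algebra_simps)
  have "integrable lborel (\<lambda>z. \<bar>z\<bar> ^ Suc j * gauss_weight a z)" for a
    using integrable_abs[OF integrable_power_gauss_weight[of "Suc j" a]]
    by (simp only: abs_mult power_abs abs_of_pos[OF gauss_weight_pos])
  then show "integrable lborel (\<lambda>z. \<bar>z\<bar> ^ Suc j * (gauss_weight (m + 1) z + gauss_weight (m - 1) z))"
    unfolding distrib_left by (intro Bochner_Integration.integrable_add)
  show "\<bar>indicator S z * z ^ Suc j * gauss_weight t z\<bar>
      \<le> \<bar>z\<bar> ^ Suc j * (gauss_weight (m + 1) z + gauss_weight (m - 1) z)"
    if "\<bar>t - m\<bar> \<le> 1" for z t
    using gauss_weight_le_shifts[OF that, of z] gauss_weight_pos[of t z]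
    by (auto simp: indicator_def abs_mult power_abs intro: mult_left_mono)
qed (use integrable_trunc_moment[OF S] S in measurable)

lemma integrable_indicator_normal_density:
  assumes "S \<in> sets borel"
  shows "integrable lborel (\<lambda>z. indicator S z * normal_density m 1 z)"
  using assms integrable_mult_indicator[of S lborel "normal_density m 1"] by simp

lemma surv_prob_eq_integral:
  assumes "S \<in> sets borel"
  shows "surv_prob S m = (LINT z|lborel. indicator S z * normal_density m 1 z)"
proof -
  have "emeasure (density lborel (normal_density m 1)) S
      = (\<integral>\<^sup>+ z. ennreal (indicator S z * normal_density m 1 z) \<partial>lborel)"
    using assms by (subst emeasure_density) (auto intro!: nn_integral_cong simp: indicator_def)
  also have "\<dots> = ennreal (LINT z|lborel. indicator S z * normal_density m 1 z)"
    using integrable_indicator_normal_density[OF assms]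
    by (intro nn_integral_eq_integral) auto
  finally show ?thesis
    unfolding surv_prob_def measure_def by (simp add: integral_nonneg_AE)
qed

lemma trunc_moment_0_eq_surv_prob:
  assumes "S \<in> sets borel"
  shows "trunc_moment S 0 m = sqrt (2 * pi) * exp (m\<^sup>2 / 2) * surv_prob S m"
proof -
  have "trunc_moment S 0 m
      = (LINT z|lborel. sqrt (2 * pi) * exp (m\<^sup>2 / 2) * (indicator S z * normal_density m 1 z))"
    unfolding trunc_moment_def gauss_weight_eq_normal_density by (simp add: mult_ac)
  then show ?thesis by (simp add: surv_prob_eq_integral[OF assms])
qed

lemma surv_prob_le_1: "surv_prob S m \<le> 1"
  unfolding surv_prob_def
  by (intro prob_space.prob_le_1 prob_space_normal_density) simp

lemma sqrt_exp: "sqrt (exp x) = exp (x / 2)"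
  by (rule real_sqrt_unique) (simp_all add: power2_eq_square mult_exp_exp)

lemma normal_density_eq_shifted_geometric_mean:
  "normal_density \<mu> 1 z
     = exp ((m - \<mu>)\<^sup>2 / 2) * sqrt (normal_density m 1 z * normal_density (2 * \<mu> - m) 1 z)"
proof -
  have "- (z - \<mu>)\<^sup>2 / 2 = (m - \<mu>)\<^sup>2 / 2 + (- (z - m)\<^sup>2 / 2 + - (z - (2 * \<mu> - m))\<^sup>2 / 2) / 2"
    by (simp add: power2_eq_square field_simps)
  then have "exp (- (z - \<mu>)\<^sup>2 / 2)
      = exp ((m - \<mu>)\<^sup>2 / 2) * sqrt (exp (- (z - m)\<^sup>2 / 2) * exp (- (z - (2 * \<mu> - m))\<^sup>2 / 2))"
    by (simp only: mult_exp_exp sqrt_exp)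
  then show ?thesis
    by (simp add: normal_density_def real_sqrt_mult real_sqrt_divide)
qed

lemma surv_prob_shift_lower_bound:
  assumes S: "S \<in> sets borel"
  shows "(surv_prob S \<mu>)\<^sup>2 \<le> exp ((m - \<mu>)\<^sup>2) * surv_prob S m"
proof (cases "surv_prob S \<mu> > 0")
  case False
  then have "surv_prob S \<mu> = 0" by (simp add: surv_prob_def order_less_le)
  then show ?thesis by (simp add: surv_prob_def)
next
  case True
  define A E where "A = surv_prob S \<mu>" and "E = exp ((m - \<mu>)\<^sup>2 / 2)"
  define t where "t = E / A"
    \<comment> \<open>the AM-GM weight that balances the two terms once P(2\<mu> - m) \<le> 1 is used\<close>
  have A: "A > 0" and t: "t > 0" using True by (simp_all add: A_def E_def t_def)
  let ?p = "\<lambda>x z. indicator S z * normal_density x 1 z"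
  have amgm: "?p \<mu> z \<le> E * (t * ?p m z + ?p (2 * \<mu> - m) z / t) / 2" for z
  proof -
    have "sqrt (normal_density m 1 z * normal_density (2 * \<mu> - m) 1 z)
        = sqrt ((t * normal_density m 1 z) * (normal_density (2 * \<mu> - m) 1 z / t))"
      using t by simp
    also have "\<dots> \<le> (t * normal_density m 1 z + normal_density (2 * \<mu> - m) 1 z / t) / 2"
      using t by (intro arith_geo_mean_sqrt) simp_all
    finally show ?thesis
      using normal_density_eq_shifted_geometric_mean[of \<mu> z m]
      by (auto simp: indicator_def E_def intro: mult_left_mono)
  qed
  have "A \<le> (LINT z|lborel. E * (t * ?p m z + ?p (2 * \<mu> - m) z / t) / 2)"
    unfolding A_def surv_prob_eq_integral[OF S]
    using amgm integrable_indicator_normal_density[OF S] by (intro integral_mono) auto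
  also have "\<dots> = E * (t * surv_prob S m + surv_prob S (2 * \<mu> - m) / t) / 2"
    using integrable_indicator_normal_density[OF S] by (simp add: surv_prob_eq_integral[OF S])
  also have "\<dots> \<le> E * (t * surv_prob S m + 1 / t) / 2"
    using surv_prob_le_1 t by (auto simp: E_def intro!: mult_left_mono divide_right_mono)
  also have "\<dots> = (E\<^sup>2 * surv_prob S m / A + A) / 2"
    using A by (simp add: t_def E_def power2_eq_square field_simps)
  finally have "A\<^sup>2 \<le> E\<^sup>2 * surv_prob S m"
    using A by (simp add: power2_eq_square field_simps)
  moreover have "E\<^sup>2 = exp ((m - \<mu>)\<^sup>2)"
    by (simp add: E_def power2_eq_square mult_exp_exp)
  ultimately show ?thesis by (simp add: A_def)
qed

lemma trunc_moment_0_pos: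
  assumes S: "S \<in> sets borel" and "surv_prob S \<mu> > 0"
  shows "trunc_moment S 0 m > 0"
proof -
  have "0 < (surv_prob S \<mu>)\<^sup>2" using assms by simp
  also have "\<dots> \<le> exp ((m - \<mu>)\<^sup>2) * surv_prob S m" by (rule surv_prob_shift_lower_bound[OF S])
  finally have "surv_prob S m > 0" by (simp add: zero_less_mult_iff)
  then show ?thesis by (simp add: trunc_moment_0_eq_surv_prob[OF S])
qed

definition trunc_mean :: "real set \<Rightarrow> real \<Rightarrow> real" where
  "trunc_mean S m = trunc_moment S 1 m / trunc_moment S 0 m"

definition trunc_var :: "real set \<Rightarrow> real \<Rightarrow> real" where
  "trunc_var S m = trunc_moment S 2 m / trunc_moment S 0 m - (trunc_mean S m)\<^sup>2"

lemma has_real_derivative_trunc_mean: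
  assumes "S \<in> sets borel" and "trunc_moment S 0 m > 0"
  shows "(trunc_mean S has_real_derivative trunc_var S m) (at m)"
proof -
  have "((\<lambda>m. trunc_moment S 1 m / trunc_moment S 0 m) has_real_derivative
      (trunc_moment S 2 m * trunc_moment S 0 m - trunc_moment S 1 m * trunc_moment S 1 m)
        / (trunc_moment S 0 m * trunc_moment S 0 m)) (at m)"
    using DERIV_divide[OF has_real_derivative_trunc_moment has_real_derivative_trunc_moment] assms
    by (simp add: numeral_2_eq_2)
  then show ?thesis
    using assms(2) unfolding trunc_mean_def[abs_def] trunc_var_def
    by (simp add: power2_eq_square diff_divide_distrib)
qed

lemma gauss_weight_chebyshev_pointwise:
  assumes r: "r > 0"
  shows "r\<^sup>2 * (indicator S z * gauss_weight m z) - r\<^sup>2 * exp (m\<^sup>2 / 2) * indicator {c - r..c + r} z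
    \<le> indicator S z * (z - c)\<^sup>2 * gauss_weight m z"
proof (cases "z \<in> {c - r..c + r}")
  case True
  have "r\<^sup>2 * gauss_weight m z \<le> r\<^sup>2 * exp (m\<^sup>2 / 2)"
    by (intro mult_left_mono gauss_weight_le) simp
  moreover have "0 \<le> (z - c)\<^sup>2 * gauss_weight m z"
    using gauss_weight_pos[of m z] by simp
  ultimately show ?thesis
    using True by (auto simp: indicator_def)
next
  case False
  then have "r\<^sup>2 \<le> (z - c)\<^sup>2"
    using r by (auto simp flip: abs_le_square_iff)
  then show ?thesis
    using False gauss_weight_pos[of m z] by (auto simp: indicator_def intro: mult_right_mono)
qed

lemma trunc_moment_central_lower_bound:
  assumes S: "S \<in> sets borel" and r: "r > 0"
  shows "r\<^sup>2 * (trunc_moment S 0 m - 2 * r * exp (m\<^sup>2 / 2))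
    \<le> trunc_moment S 2 m - 2 * c * trunc_moment S 1 m + c\<^sup>2 * trunc_moment S 0 m"
proof -
  let ?f = "\<lambda>j z. indicator S z * z ^ j * gauss_weight m z"
  let ?B = "exp (m\<^sup>2 / 2)"
  note I = integrable_trunc_moment[OF S, of _ m]
  have J: "integrable lborel (\<lambda>z. indicator {c - r..c + r} z :: real)"
    by (simp add: integrable_indicator_iff emeasure_lborel_Icc_eq)
  have "(LINT z|lborel. r\<^sup>2 * ?f 0 z - r\<^sup>2 * ?B * indicator {c - r..c + r} z)
      = r\<^sup>2 * trunc_moment S 0 m - r\<^sup>2 * ?B * (LINT z|lborel. indicator {c - r..c + r} z)"
    using I[of 0] J by (simp add: trunc_moment_def Bochner_Integration.integral_diff)
  also have "(LINT z|lborel. indicator {c - r..c + r} z) = 2 * r"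
    using r by simp
  finally have "r\<^sup>2 * (trunc_moment S 0 m - 2 * r * ?B)
      = (LINT z|lborel. r\<^sup>2 * ?f 0 z - r\<^sup>2 * ?B * indicator {c - r..c + r} z)"
    by (simp add: algebra_simps)
  also have "\<dots> \<le> (LINT z|lborel. ?f 2 z - 2 * c * ?f 1 z + c\<^sup>2 * ?f 0 z)"
  proof (rule integral_mono)
    fix z
    have "?f 2 z - 2 * c * ?f 1 z + c\<^sup>2 * ?f 0 z = indicator S z * (z - c)\<^sup>2 * gauss_weight m z"
      by (simp add: power2_eq_square algebra_simps)
    then show "r\<^sup>2 * ?f 0 z - r\<^sup>2 * ?B * indicator {c - r..c + r} z
        \<le> ?f 2 z - 2 * c * ?f 1 z + c\<^sup>2 * ?f 0 z"
      using gauss_weight_chebyshev_pointwise[OF r, of S z m c] by simp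
  qed (intro Bochner_Integration.integrable_add Bochner_Integration.integrable_diff
      integrable_mult_right I J)+
  also have "\<dots> = trunc_moment S 2 m - 2 * c * trunc_moment S 1 m + c\<^sup>2 * trunc_moment S 0 m"
    using I[of 0] I[of 1] I[of 2]
    by (simp add: trunc_moment_def Bochner_Integration.integral_add Bochner_Integration.integral_diff)
  finally show ?thesis .
qed

lemma trunc_var_ge_surv_prob:
  assumes S: "S \<in> sets borel" and P: "surv_prob S m > 0"
  shows "pi / 16 * (surv_prob S m)\<^sup>2 \<le> trunc_var S m"
proof -
  define F0 F1 F2 where "F0 = trunc_moment S 0 m" and "F1 = trunc_moment S 1 m"
    and "F2 = trunc_moment S 2 m"
  define B where "B = exp (m\<^sup>2 / 2)"
  define r where "r = F0 / (4 * B)"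
    \<comment> \<open>then [c - r, c + r] carries at most half of the mass F0, whatever the centre c\<close>
  have F0: "F0 = sqrt (2 * pi) * B * surv_prob S m"
    unfolding F0_def B_def by (rule trunc_moment_0_eq_surv_prob[OF S])
  have B: "B > 0" unfolding B_def by simp
  then have F0_pos: "F0 > 0" using P by (simp add: F0)
  then have r: "r > 0" using B by (simp add: r_def)
  have "r\<^sup>2 * (F0 - 2 * r * B) \<le> F2 - 2 * (F1 / F0) * F1 + (F1 / F0)\<^sup>2 * F0"
    unfolding F0_def F1_def F2_def B_def by (rule trunc_moment_central_lower_bound[OF S r[unfolded B_def]])
  also have "\<dots> = F0 * trunc_var S m"
    using F0_pos by (simp add: trunc_var_def trunc_mean_def F0_def F1_def F2_def power2_eq_square field_simps)
  also have "r\<^sup>2 * (F0 - 2 * r * B) = F0 * (r\<^sup>2 / 2)"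
    using B by (simp add: r_def field_simps)
  finally have "r\<^sup>2 / 2 \<le> trunc_var S m"
    using F0_pos by simp
  moreover have "r\<^sup>2 / 2 = pi / 16 * (surv_prob S m)\<^sup>2"
    using B by (simp add: r_def F0 power_mult_distrib power_divide)
  ultimately show ?thesis by simp
qed

lemma trunc_var_lower_bound:
  assumes S: "S \<in> sets borel" and "\<alpha> > 0" and "\<alpha> \<le> surv_prob S \<mu>" and "\<bar>m - \<mu>\<bar> \<le> 1"
  shows "pi * exp (-2) / 16 * \<alpha> ^ 4 \<le> trunc_var S m"
proof -
  have "\<alpha>\<^sup>2 \<le> (surv_prob S \<mu>)\<^sup>2"
    using assms by (intro power_mono) auto
  also have "\<dots> \<le> exp ((m - \<mu>)\<^sup>2) * surv_prob S m"
    by (rule surv_prob_shift_lower_bound[OF S])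
  also have "\<dots> \<le> exp 1 * surv_prob S m"
    using assms(4) abs_le_square_iff[of "m - \<mu>" 1]
    by (intro mult_right_mono) (simp_all add: surv_prob_def)
  finally have P: "\<alpha>\<^sup>2 * exp (-1) \<le> surv_prob S m"
    by (simp add: exp_minus field_simps)
  have "0 < \<alpha>\<^sup>2 * exp (-1)"
    using assms(2) by simp
  then have P_pos: "0 < surv_prob S m"
    using P by (rule less_le_trans)
  have "pi * exp (-2) / 16 * \<alpha> ^ 4 = pi / 16 * (\<alpha>\<^sup>2 * exp (-1))\<^sup>2"
  proof -
    have "exp (-2 :: real) = (exp (-1))\<^sup>2" by (simp add: power2_eq_square mult_exp_exp)
    then show ?thesis by (simp add: power_mult_distrib flip: power_mult)
  qed
  also have "\<dots> \<le> pi / 16 * (surv_prob S m)\<^sup>2"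
    using P assms(2) by (intro mult_left_mono power_mono) auto
  also have "\<dots> \<le> trunc_var S m"
    by (rule trunc_var_ge_surv_prob[OF S P_pos])
  finally show ?thesis .
qed

lemma Kidx_in: "finite K \<Longrightarrow> p < card K \<Longrightarrow> Kidx K p \<in> K"
  unfolding Kidx_def by (metis length_sorted_list_of_set nth_mem set_sorted_list_of_set)

lemma sum_Kidx:
  assumes "finite K"
  shows "(\<Sum>p<card K. f (Kidx K p)) = (\<Sum>j\<in>K. f j)"
proof -
  have "(\<Sum>j\<in>K. f j) = sum_list (map f (sorted_list_of_set K))"
    using assms by (simp add: sum_list_distinct_conv_sum_set)
  also have "\<dots> = (\<Sum>p<card K. f (Kidx K p))"
    using assms by (simp add: sum_list_sum_nth Kidx_def atLeast0LessThan)
  finally show ?thesis by simp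
qed

lemma row_ip_extK:
  assumes K: "K \<subseteq> {..<d}"
  shows "row_ip X d i (extK K \<omega>) = (\<Sum>p<card K. X i (Kidx K p) * \<omega> p)"
proof -
  have fin: "finite K" using K finite_subset by blast
  have "row_ip X d i (extK K \<omega>) = (\<Sum>j<d. \<Sum>p<card K. if Kidx K p = j then X i j * \<omega> p else 0)"
    unfolding row_ip_def extK_def by (simp add: sum_distrib_left if_distrib cong: if_cong)
  also have "\<dots> = (\<Sum>p<card K. \<Sum>j<d. if Kidx K p = j then X i j * \<omega> p else 0)"
    by (rule sum.swap)
  also have "\<dots> = (\<Sum>p<card K. X i (Kidx K p) * \<omega> p)"
    using Kidx_in[OF fin] K by (intro sum.cong) (auto simp: sum.delta)
  finally show ?thesis .
qed

lemma row_ip_supported: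
  assumes K: "K \<subseteq> {..<d}" and supp: "{j. j < d \<and> \<Omega> j \<noteq> 0} = K"
  shows "row_ip X d i \<Omega> = (\<Sum>p<card K. X i (Kidx K p) * \<Omega> (Kidx K p))"
proof -
  have "row_ip X d i \<Omega> = (\<Sum>j\<in>K. X i j * \<Omega> j)"
    unfolding row_ip_def by (rule sum.mono_neutral_right) (use K supp in auto)
  then show ?thesis
    using sum_Kidx[OF finite_subset[OF K finite_lessThan], of "\<lambda>j. X i j * \<Omega> j"] by simp
qed

lemma sum_mult_fun_upd:
  fixes x u :: "nat \<Rightarrow> real"
  assumes "p < k"
  shows "(\<Sum>q<k. x q * (u(p := t)) q) = (\<Sum>q<k. x q * u q) + x p * (t - u p)"
proof -
  have "(\<Sum>q<k. x q * (u(p := t)) q) = (\<Sum>q<k. x q * u q + (if q = p then x p * (t - u p) else 0))"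
    by (intro sum.cong) (auto simp: algebra_simps)
  then show ?thesis
    using assms by (simp add: sum.distrib)
qed

lemma is_hessian_ridge_sum:
  fixes \<phi> \<phi>' \<phi>'' :: "nat \<Rightarrow> real \<Rightarrow> real" and x :: "nat \<Rightarrow> nat \<Rightarrow> real"
  assumes d1: "\<And>i m. (\<phi> i has_real_derivative \<phi>' i m) (at m)"
    and d2: "\<And>i m. (\<phi>' i has_real_derivative \<phi>'' i m) (at m)"
  shows "is_hessian (\<lambda>u. c * (\<Sum>i<n. \<phi> i (\<Sum>p<k. x i p * u p))) k w
    (\<lambda>p q. c * (\<Sum>i<n. \<phi>'' i (\<Sum>p<k. x i p * w p) * x i p * x i q))"
  unfolding is_hessian_def
proof (intro exI[of _ "\<lambda>p u. c * (\<Sum>i<n. \<phi>' i (\<Sum>q<k. x i q * u q) * x i p)"] conjI allI impI)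
  fix u p assume p: "p < k"
  show "has_partial (\<lambda>u. c * (\<Sum>i<n. \<phi> i (\<Sum>p<k. x i p * u p))) p u
      (c * (\<Sum>i<n. \<phi>' i (\<Sum>q<k. x i q * u q) * x i p))"
    unfolding has_partial_def sum_mult_fun_upd[OF p]
    by (auto intro!: derivative_eq_intros DERIV_chain2[OF d1])
next
  fix p q assume q: "q < k"
  show "has_partial (\<lambda>u. c * (\<Sum>i<n. \<phi>' i (\<Sum>q<k. x i q * u q) * x i p)) q w
      (c * (\<Sum>i<n. \<phi>'' i (\<Sum>p<k. x i p * w p) * x i p * x i q))"
    unfolding has_partial_def sum_mult_fun_upd[OF q]
    by (auto intro!: derivative_eq_intros DERIV_chain2[OF d2] simp: mult_ac)
qed

lemma quadratic_form_weighted_gram: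
  fixes x :: "nat \<Rightarrow> nat \<Rightarrow> real"
  shows "(\<Sum>p<k. \<Sum>q<k. v p * (c * (\<Sum>i<n. w i * x i p * x i q)) * v q)
    = c * (\<Sum>i<n. w i * (\<Sum>p<k. x i p * v p)\<^sup>2)"
proof -
  have "c * (\<Sum>i<n. w i * (\<Sum>p<k. x i p * v p)\<^sup>2)
      = (\<Sum>i<n. \<Sum>p<k. \<Sum>q<k. c * w i * x i p * v p * x i q * v q)"
    by (simp add: power2_eq_square sum_product sum_distrib_left mult_ac)
  also have "\<dots> = (\<Sum>p<k. \<Sum>q<k. \<Sum>i<n. c * w i * x i p * v p * x i q * v q)"
    by (subst sum.swap) (simp add: sum.swap[of _ "{..<n}"])
  also have "\<dots> = (\<Sum>p<k. \<Sum>q<k. v p * (c * (\<Sum>i<n. w i * x i p * x i q)) * v q)"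
    by (simp add: sum_distrib_left sum_distrib_right mult_ac)
  finally show ?thesis by simp
qed

lemma quadratic_form_weighted_gram_lower_bound:
  fixes x :: "nat \<Rightarrow> nat \<Rightarrow> real"
  assumes w: "\<And>i. i < n \<Longrightarrow> b \<le> w i" and b: "b \<ge> 0" and c: "c \<ge> 0"
    and gram: "\<sigma> * (\<Sum>j<k. (v j)\<^sup>2) \<le> c * (\<Sum>i<n. (\<Sum>p<k. x i p * v p)\<^sup>2)"
  shows "b * \<sigma> * (\<Sum>j<k. (v j)\<^sup>2) \<le> (\<Sum>p<k. \<Sum>q<k. v p * (c * (\<Sum>i<n. w i * x i p * x i q)) * v q)"
proof -
  have "b * \<sigma> * (\<Sum>j<k. (v j)\<^sup>2) \<le> b * (c * (\<Sum>i<n. (\<Sum>p<k. x i p * v p)\<^sup>2))"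
    unfolding mult.assoc using gram b by (rule mult_left_mono)
  also have "\<dots> = c * (\<Sum>i<n. b * (\<Sum>p<k. x i p * v p)\<^sup>2)"
    by (simp add: sum_distrib_left mult_ac)
  also have "\<dots> \<le> c * (\<Sum>i<n. w i * (\<Sum>p<k. x i p * v p)\<^sup>2)"
    using w c by (intro mult_left_mono sum_mono mult_right_mono) auto
  also have "\<dots> = (\<Sum>p<k. \<Sum>q<k. v p * (c * (\<Sum>i<n. w i * x i p * x i q)) * v q)"
    by (rule quadratic_form_weighted_gram[symmetric])
  finally show ?thesis .
qed

lemma abs_sum_mult_le_one:
  fixes x \<delta> :: "nat \<Rightarrow> real"
  assumes x: "\<And>p. p < k \<Longrightarrow> \<bar>x p\<bar> \<le> C"
    and \<delta>: "sqrt (\<Sum>p<k. (\<delta> p)\<^sup>2) \<le> 1 / (C * sqrt (real k))"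
  shows "\<bar>\<Sum>p<k. x p * \<delta> p\<bar> \<le> 1"
proof -
  have "(x p)\<^sup>2 \<le> C\<^sup>2" if "p < k" for p
    using x[OF that] by (auto simp flip: abs_le_square_iff)
  then have x2: "(\<Sum>p<k. (x p)\<^sup>2) \<le> real k * C\<^sup>2"
    using sum_mono[of "{..<k}" "\<lambda>p. (x p)\<^sup>2" "\<lambda>p. C\<^sup>2"] by simp
  have \<delta>2: "(\<Sum>p<k. (\<delta> p)\<^sup>2) \<le> (1 / (C * sqrt (real k)))\<^sup>2"
    using power_mono[OF \<delta>, of 2] by (simp add: sum_nonneg)
  have "(\<Sum>p<k. x p * \<delta> p)\<^sup>2 \<le> (\<Sum>p<k. (x p)\<^sup>2) * (\<Sum>p<k. (\<delta> p)\<^sup>2)"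
    by (rule Cauchy_Schwarz_ineq_sum)
  also have "\<dots> \<le> real k * C\<^sup>2 * (1 / (C * sqrt (real k)))\<^sup>2"
    using x2 \<delta>2 by (intro mult_mono) (simp_all add: sum_nonneg)
  also have "\<dots> \<le> 1"
    by (cases "C = 0 \<or> k = 0") (auto simp: power_divide power_mult_distrib)
  finally show ?thesis
    by (simp add: abs_square_le_1)
qed

lemma restricted_nll_hessian_lower_bound:
  fixes X :: "nat \<Rightarrow> nat \<Rightarrow> real" and \<Omega> \<omega> y :: "nat \<Rightarrow> real"
  assumes n: "n \<ge> 1" and K: "K \<subseteq> {..<d}" and supp: "{j. j < d \<and> \<Omega> j \<noteq> 0} = K"
    and S: "S \<in> sets lborel" and \<alpha>: "\<alpha> > 0"
    and surv: "\<forall>i<n. surv_prob S (row_ip X d i \<Omega>) \<ge> \<alpha>"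
    and eig: "\<forall>v::nat \<Rightarrow> real. (1 / real n) * (\<Sum>i<n. (\<Sum>j<card K. X i (Kidx K j) * v j)\<^sup>2)
      \<ge> \<sigma> * (\<Sum>j<card K. (v j)\<^sup>2)"
    and XC: "\<forall>i<n. \<forall>j<d. \<bar>X i j\<bar> \<le> C"
    and \<omega>: "sqrt (\<Sum>j<card K. (\<omega> j - \<Omega> (Kidx K j))\<^sup>2) \<le> 1 / (C * sqrt (real (card K)))"
  shows "\<exists>H. is_hessian (trunc_nll_K S n d K X y) (card K) \<omega> H \<and>
    (\<forall>v::nat \<Rightarrow> real. (\<Sum>i<card K. \<Sum>j<card K. v i * H i j * v j)
      \<ge> pi * exp (-2) / 16 * \<alpha> ^ 4 * \<sigma> * (\<Sum>j<card K. (v j)\<^sup>2))"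
proof -
  have S': "S \<in> sets borel" using S by simp
  have fin: "finite K" using K finite_subset by blast
  define x where "x i p = X i (Kidx K p)" for i p
  define a where "a i = (\<Sum>p<card K. x i p * \<omega> p)" for i
  define \<phi> where "\<phi> i = (\<lambda>m. (1/2) * (y i)\<^sup>2 - y i * m + ln (trunc_moment S 0 m))" for i
  have "0 < surv_prob S (row_ip X d 0 \<Omega>)"
    using surv n \<alpha> by (auto intro: less_le_trans)
  then have F0_pos: "trunc_moment S 0 m > 0" for m
    by (rule trunc_moment_0_pos[OF S'])
  have loss: "trunc_nll_K S n d K X y = (\<lambda>u. (1 / real n) * (\<Sum>i<n. \<phi> i (\<Sum>p<card K. x i p * u p)))"
    by (simp add: fun_eq_iff trunc_nll_K_def trunc_nll_def row_ip_extK[OF K] \<phi>_def x_def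
        trunc_moment_def gauss_weight_def)
  have "(\<phi> i has_real_derivative - y i + trunc_mean S m) (at m)" for i m
    unfolding \<phi>_def
    by (auto intro!: derivative_eq_intros has_real_derivative_trunc_moment S' F0_pos
        simp: trunc_mean_def)
  moreover have "((\<lambda>m. - y i + trunc_mean S m) has_real_derivative trunc_var S m) (at m)" for i m
    by (auto intro!: derivative_eq_intros has_real_derivative_trunc_mean S' F0_pos)
  ultimately have hess: "is_hessian (trunc_nll_K S n d K X y) (card K) \<omega>
      (\<lambda>p q. (1 / real n) * (\<Sum>i<n. trunc_var S (a i) * x i p * x i q))"
    unfolding loss a_def by (rule is_hessian_ridge_sum)
  have var: "pi * exp (-2) / 16 * \<alpha> ^ 4 \<le> trunc_var S (a i)" if i: "i < n" for i
  proof -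
    have "a i - row_ip X d i \<Omega> = (\<Sum>p<card K. x i p * (\<omega> p - \<Omega> (Kidx K p)))"
      by (simp add: a_def x_def row_ip_supported[OF K supp] sum_subtractf right_diff_distrib)
    also have "\<bar>\<dots>\<bar> \<le> 1"
      using XC i Kidx_in[OF fin] K \<omega> by (intro abs_sum_mult_le_one) (auto simp: x_def)
    finally have "\<bar>a i - row_ip X d i \<Omega>\<bar> \<le> 1" .
    then show ?thesis
      by (rule trunc_var_lower_bound[OF S' \<alpha> surv[rule_format, OF i]])
  qed
  show ?thesis
  proof (intro exI conjI allI)
    show "is_hessian (trunc_nll_K S n d K X y) (card K) \<omega>
        (\<lambda>p q. (1 / real n) * (\<Sum>i<n. trunc_var S (a i) * x i p * x i q))"
      by (rule hess)
    fix v :: "nat \<Rightarrow> real"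
    show "(\<Sum>p<card K. \<Sum>q<card K.
        v p * ((1 / real n) * (\<Sum>i<n. trunc_var S (a i) * x i p * x i q)) * v q)
        \<ge> pi * exp (-2) / 16 * \<alpha> ^ 4 * \<sigma> * (\<Sum>j<card K. (v j)\<^sup>2)"
      using var eig unfolding x_def by (intro quadratic_form_weighted_gram_lower_bound) auto
  qed
qed

theorem lemma13:
  shows "\<exists>c>0. \<forall>(n::nat) (d::nat) (K::nat set) (X::nat \<Rightarrow> nat \<Rightarrow> real) (\<Omega>s::nat \<Rightarrow> real)
            (S::real set) (y::nat \<Rightarrow> real) (\<alpha>::real) (\<sigma>min::real) (C::real).
     n \<ge> 1 \<and> K \<subseteq> {..<d} \<and> {j. j < d \<and> \<Omega>s j \<noteq> 0} = K \<and> S \<in> sets lborel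
     \<and> \<alpha> > 0 \<and> (\<forall>i<n. surv_prob S (row_ip X d i \<Omega>s) \<ge> \<alpha>)
     \<and> \<sigma>min > 0 \<and> (\<forall>v::nat \<Rightarrow> real.
           (1 / real n) * (\<Sum>i<n. (\<Sum>j<card K. X i (Kidx K j) * v j)\<^sup>2)
             \<ge> \<sigma>min * (\<Sum>j<card K. (v j)\<^sup>2))
     \<and> (\<forall>i<n. \<forall>j<d. \<bar>X i j\<bar> \<le> C)
     \<longrightarrow> (\<exists>\<kappa>. \<kappa> \<ge> c * \<alpha> ^ 4 * \<sigma>min \<and> \<kappa> > 0 \<and>
           (\<forall>\<omega>::nat \<Rightarrow> real.
              sqrt (\<Sum>j<card K. (\<omega> j - \<Omega>s (Kidx K j))\<^sup>2) \<le> 1 / (C * sqrt (real (card K)))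
              \<longrightarrow> (\<exists>H. is_hessian (trunc_nll_K S n d K X y) (card K) \<omega> H \<and>
                    (\<forall>v::nat \<Rightarrow> real. (\<Sum>i<card K. \<Sum>j<card K. v i * H i j * v j)
                        \<ge> \<kappa> * (\<Sum>j<card K. (v j)\<^sup>2)))))"
proof (rule exI[of _ "pi * exp (-2) / 16"], intro conjI allI impI, goal_cases)
  case 1
  then show ?case by simp
next
  case (2 n d K X \<Omega>s S y \<alpha> \<sigma>min C)
  then show ?case
    by (intro exI[of _ "pi * exp (-2) / 16 * \<alpha> ^ 4 * \<sigma>min"] conjI allI impI order_refl
        mult_pos_pos zero_less_power restricted_nll_hessian_lower_bound) auto
qed

end
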